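(* (i) For every context $\Gamma$: if $\Gamma\ \mathrm{ok}$ then $\Gamma\ \mathrm{ok}_s$. (ii) For every context $\Gamma$ and terms $M,A$: if $\Gamma\vdash M:A$ then $\Gamma\vdash_s M:A$.
   Context: Let $\mathcal V$ (the variables) be a type with decidable equality, equipped with functions $\mathrm{encode}:\mathcal V\to\mathbb N$ and $\mathrm{decode}:\mathbb N\to\mathcal V$ such that $\mathrm{encode}(\mathrm{decode}\,n)=n$ for all $n$. Let $\mathcal C$ (the constants) be any type. Terms $\Lambda$ are generated by: $c\,k$ ($k\in\mathcal C$), $v\,x$ ($x\in\mathcal V$), $\lambda[x:A]M$, $\Pi[x:A]B$ and $M\cdot N$; in $\lambda[x:A]M$ and $\Pi[x:A]B$ the name $x$ binds in $M$ (resp. $B$) but not in $A$. Terms are raw first-order syntax (not identified up to renaming of bound variables) and $\equiv$ denotes syntactic identity. The list of free variables is $\mathrm{fv}(c\,k)=[\,]$, $\mathrm{fv}(v\,x)=[x]$, $\mathrm{fv}(\lambda[x:A]M)=\mathrm{fv}\,A\mathbin{+\!\!+}(\mathrm{fv}\,M-x)$, $\mathrm{fv}(\Pi[x:A]B)=\mathrm{fv}\,A\mathbin{+\!\!+}(\mathrm{fv}\,B-x)$, $\mathrm{fv}(M\cdot N)=\mathrm{fv}\,M\mathbin{+\!\!+}\mathrm{fv}\,N$, where $\mathbin{+\!\!+}$ is list concatenation and $xs-x$ deletes every occurrence of $x$ from $xs$. Fix a function $\chi':\mathrm{List}\,\mathbb N\to\mathbb N$ with $\chi'(ns)\notin ns$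 for every list $ns$, and put $X'(xs)=\mathrm{decode}(\chi'(\mathrm{map}\ \mathrm{encode}\ xs))$. A substitution is any function $\sigma:\mathcal V\to\Lambda$; $\iota=v$ is the identity substitution; $(\sigma,x:=N)(y)=N$ if $y=x$ and $\sigma\,y$ otherwise. For a substitution $\sigma$ and a list $xs$ of variables, $X(\sigma,xs)=X'(\text{concatenation of the lists }\mathrm{fv}(\sigma\,y)\text{ for }y\in xs)$. The action $M\bullet\sigma$ is defined by structural recursion: $c\,k\bullet\sigma=c\,k$; $v\,x\bullet\sigma=\sigma\,x$; $(M\cdot N)\bullet\sigma=(M\bullet\sigma)\cdot(N\bullet\sigma)$; $(\lambda[x:A]M)\bullet\sigma=\lambda[y:A\bullet\sigma](M\bullet(\sigma,x:=v\,y))$ with $y=X(\sigma,\mathrm{fv}\,M-x)$; $(\Pi[x:A]B)\bullet\sigma=\Pi[y:A\bullet\sigma](B\bullet(\sigma,x:=v\,y))$ with $y=X(\sigma,\mathrm{fv}\,B-x)$. Unary substitution is $M[x:=N]=M\bullet(\iota,x:=N)$. $\alpha$-conversion $\sim_\alpha$ is the inductively defined relation with rules: $c\,k\sim_\alpha c\,k$; $v\,x\sim_\alpha v\,x$; $M\cdot N\sim_\alpha M'\cdot N'$ if $M\sim_\alpha M'$ and $N\sim_\alpha N'$; $\lambda[x:A]M\sim_\alpha\lambda[x':A']M'$ if $A\sim_\alpha A'$ and there is a variable $y$ with $y\notin\mathrm{fv}\,M-x$, $y\notin\mathrm{fv}\,M'-x'$ and $M[x:=v\,y]\equiv M'[x':=v\,y]$;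 and the same rule with $\Pi$ in place of $\lambda$. $\beta$-contraction is $(\lambda[x:A]M)\cdot N\ \triangleright_\beta\ M[x:=N]$. One-step $\beta$-reduction $\to_\beta$ is its contextual closure, inductively: $M\to_\beta N$ if $M\triangleright_\beta N$; $\lambda[x:A]M\to_\beta\lambda[x:A]M'$ and $\Pi[x:A]M\to_\beta\Pi[x:A]M'$ if $M\to_\beta M'$; $\lambda[x:A]M\to_\beta\lambda[x:A']M$ and $\Pi[x:A]M\to_\beta\Pi[x:A']M$ if $A\to_\beta A'$; $M\cdot P\to_\beta N\cdot P$ and $P\cdot M\to_\beta P\cdot N$ if $M\to_\beta N$. $\beta$-conversion $\simeq_\beta$ is the equivalence (reflexive–symmetric–transitive) closure of $\sim_\alpha\cup\to_\beta$. Pure Type System: fix a binary relation $\mathcal A\subseteq\mathcal C\times\mathcal C$ (axioms) and a ternary relation $\mathcal R\subseteq\mathcal C\times\mathcal C\times\mathcal C$ (rules). A context is a finite list of pairs $(x,A)$ with $x\in\mathcal V$, $A\in\Lambda$; $\Gamma,x:A$ denotes the list $(x,A)::\Gamma$; $\mathrm{dom}\,\Gamma$ is the list of first components; $(x,A)\in\Gamma$ is list membership. The judgments $\Gamma\ \mathrm{ok}$ and $\Gamma\vdash M:A$ are defined mutually inductively by: (nil) $[\,]\ \mathrm{ok}$; (cons) if $\Gamma\ \mathrm{ok}$, $\Gamma\vdash A:c\,s$ and $x\notin\mathrm{dom}\,\Gamma$ then $\Gamma,x:A\ \mathrm{ok}$; (sort) if $\Gamma\ \mathrm{ok}$ and $\mathcal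 A\,s_1\,s_2$ then $\Gamma\vdash c\,s_1:c\,s_2$; (var) if $\Gamma\ \mathrm{ok}$ and $(x,A)\in\Gamma$ then $\Gamma\vdash v\,x:A$; (prod) if $\mathcal R\,s_1\,s_2\,s_3$, $\Gamma\vdash A:c\,s_1$ and for every $y\notin\mathrm{dom}\,\Gamma$, $\Gamma,y:A\vdash B[x:=v\,y]:c\,s_2$, then $\Gamma\vdash\Pi[x:A]B:c\,s_3$; (abs) if $\mathcal R\,s_1\,s_2\,s_3$, $\Gamma\vdash A:c\,s_1$, for every $z\notin\mathrm{dom}\,\Gamma$, $\Gamma,z:A\vdash B[y:=v\,z]:c\,s_2$, and for every $z\notin\mathrm{dom}\,\Gamma$, $\Gamma,z:A\vdash M[x:=v\,z]:B[y:=v\,z]$, then $\Gamma\vdash\lambda[x:A]M:\Pi[y:A]B$; (app) if $\Gamma\vdash M:\Pi[x:A]B$, $\Gamma\vdash N:A$ and $\Gamma\vdash B[x:=N]:c\,s$ for some $s$, then $\Gamma\vdash M\cdot N:B[x:=N]$; (conv) if $\Gamma\vdash M:A$, $A\simeq_\beta B$ and $\Gamma\vdash B:c\,s$ for some $s$, then $\Gamma\vdash M:B$. (The premises quantified over all fresh names in (prod) and (abs) are infinitely branching.) Finitary (standard) presentation: the judgments $\Gamma\ \mathrm{ok}_s$ and $\Gamma\vdash_s M:A$ are defined mutually inductively by: (nil) $[\,]\ \mathrm{ok}_s$; (cons) if $\Gamma\ \mathrm{ok}_s$, $\Gamma\vdash_s A:c\,s$ and $x\notin\mathrm{dom}\,\Gamma$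 then $\Gamma,x:A\ \mathrm{ok}_s$; (sort) if $\Gamma\ \mathrm{ok}_s$ and $\mathcal A\,s_1\,s_2$ then $\Gamma\vdash_s c\,s_1:c\,s_2$; (var) if $\Gamma\ \mathrm{ok}_s$ and $(x,A)\in\Gamma$ then $\Gamma\vdash_s v\,x:A$; (prod) if $\mathcal R\,s_1\,s_2\,s_3$, $y\notin\mathrm{fv}\,B-x$, $\Gamma\vdash_s A:c\,s_1$ and $\Gamma,y:A\vdash_s B[x:=v\,y]:c\,s_2$, then $\Gamma\vdash_s\Pi[x:A]B:c\,s_3$; (abs) if $\mathcal R\,s_1\,s_2\,s_3$, $z\notin\mathrm{fv}\,M-x$, $z\notin\mathrm{fv}\,B-y$, $\Gamma\vdash_s A:c\,s_1$, $\Gamma,z:A\vdash_s B[y:=v\,z]:c\,s_2$ and $\Gamma,z:A\vdash_s M[x:=v\,z]:B[y:=v\,z]$, then $\Gamma\vdash_s\lambda[x:A]M:\Pi[y:A]B$; (app) if $\Gamma\vdash_s M:\Pi[x:A]B$ and $\Gamma\vdash_s N:A$ then $\Gamma\vdash_s M\cdot N:B[x:=N]$; (conv) if $\Gamma\vdash_s M:A$, $A\simeq_\beta B$ and $\Gamma\vdash_s B:c\,s$ for some $s$, then $\Gamma\vdash_s M:B$. *)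

theory Defs
  imports Main
begin

datatype ('v, 'c) trm =
    Cst 'c
  | Var 'v
  | Lam 'v "('v, 'c) trm" "('v, 'c) trm"   (* Lam x A M  =  lambda[x:A] M *)
  | Pi 'v "('v, 'c) trm" "('v, 'c) trm"    (* Pi x A B   =  Pi[x:A] B *)
  | App "('v, 'c) trm" "('v, 'c) trm"

primrec fv :: "('v, 'c) trm \<Rightarrow> 'v list" where
  "fv (Cst k) = []"
| "fv (Var x) = [x]"
| "fv (Lam x A M) = fv A @ removeAll x (fv M)"
| "fv (Pi x A B) = fv A @ removeAll x (fv B)"
| "fv (App M N) = fv M @ fv N"

definition Xp :: "('v \<Rightarrow> nat) \<Rightarrow> (nat \<Rightarrow> 'v) \<Rightarrow> (nat list \<Rightarrow> nat) \<Rightarrow> 'v list \<Rightarrow> 'v" where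
  "Xp enc dec ch xs = dec (ch (map enc xs))"

definition Xs :: "('v \<Rightarrow> nat) \<Rightarrow> (nat \<Rightarrow> 'v) \<Rightarrow> (nat list \<Rightarrow> nat) \<Rightarrow> ('v \<Rightarrow> ('v, 'c) trm) \<Rightarrow> 'v list \<Rightarrow> 'v" where
  "Xs enc dec ch \<sigma> xs = Xp enc dec ch (concat (map (\<lambda>y. fv (\<sigma> y)) xs))"

primrec sbst :: "('v \<Rightarrow> nat) \<Rightarrow> (nat \<Rightarrow> 'v) \<Rightarrow> (nat list \<Rightarrow> nat) \<Rightarrow> ('v, 'c) trm \<Rightarrow> ('v \<Rightarrow> ('v, 'c) trm) \<Rightarrow> ('v, 'c) trm" where
  "sbst enc dec ch (Cst k) \<sigma> = Cst k"
| "sbst enc dec ch (Var x) \<sigma> = \<sigma> x"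
| "sbst enc dec ch (App M N) \<sigma> = App (sbst enc dec ch M \<sigma>) (sbst enc dec ch N \<sigma>)"
| "sbst enc dec ch (Lam x A M) \<sigma> =
     (let y = Xs enc dec ch \<sigma> (removeAll x (fv M))
      in Lam y (sbst enc dec ch A \<sigma>) (sbst enc dec ch M (\<sigma>(x := Var y))))"
| "sbst enc dec ch (Pi x A B) \<sigma> =
     (let y = Xs enc dec ch \<sigma> (removeAll x (fv B))
      in Pi y (sbst enc dec ch A \<sigma>) (sbst enc dec ch B (\<sigma>(x := Var y))))"

definition usubst :: "('v \<Rightarrow> nat) \<Rightarrow> (nat \<Rightarrow> 'v) \<Rightarrow> (nat list \<Rightarrow> nat) \<Rightarrow> ('v, 'c) trm \<Rightarrow> 'v \<Rightarrow> ('v, 'c) trm \<Rightarrow> ('v, 'c) trm" where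
  "usubst enc dec ch M x N = sbst enc dec ch M (Var(x := N))"

inductive alpha :: "('v \<Rightarrow> nat) \<Rightarrow> (nat \<Rightarrow> 'v) \<Rightarrow> (nat list \<Rightarrow> nat) \<Rightarrow> ('v, 'c) trm \<Rightarrow> ('v, 'c) trm \<Rightarrow> bool"
  for enc dec ch where
  a_cst: "alpha enc dec ch (Cst k) (Cst k)"
| a_var: "alpha enc dec ch (Var x) (Var x)"
| a_app: "alpha enc dec ch M M' \<Longrightarrow> alpha enc dec ch N N' \<Longrightarrow> alpha enc dec ch (App M N) (App M' N')"
| a_lam: "alpha enc dec ch A A' \<Longrightarrow> y \<notin> set (removeAll x (fv M)) \<Longrightarrow> y \<notin> set (removeAll x' (fv M')) \<Longrightarrow>
          usubst enc dec ch M x (Var y) = usubst enc dec ch M' x' (Var y) \<Longrightarrow>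
          alpha enc dec ch (Lam x A M) (Lam x' A' M')"
| a_pi: "alpha enc dec ch A A' \<Longrightarrow> y \<notin> set (removeAll x (fv M)) \<Longrightarrow> y \<notin> set (removeAll x' (fv M')) \<Longrightarrow>
          usubst enc dec ch M x (Var y) = usubst enc dec ch M' x' (Var y) \<Longrightarrow>
          alpha enc dec ch (Pi x A M) (Pi x' A' M')"

inductive beta :: "('v \<Rightarrow> nat) \<Rightarrow> (nat \<Rightarrow> 'v) \<Rightarrow> (nat list \<Rightarrow> nat) \<Rightarrow> ('v, 'c) trm \<Rightarrow> ('v, 'c) trm \<Rightarrow> bool"
  for enc dec ch where
  b_contr: "beta enc dec ch (App (Lam x A M) N) (usubst enc dec ch M x N)"
| b_lam_body: "beta enc dec ch M M' \<Longrightarrow> beta enc dec ch (Lam x A M) (Lam x A M')"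
| b_pi_body: "beta enc dec ch M M' \<Longrightarrow> beta enc dec ch (Pi x A M) (Pi x A M')"
| b_lam_dom: "beta enc dec ch A A' \<Longrightarrow> beta enc dec ch (Lam x A M) (Lam x A' M)"
| b_pi_dom: "beta enc dec ch A A' \<Longrightarrow> beta enc dec ch (Pi x A M) (Pi x A' M)"
| b_app_l: "beta enc dec ch M N \<Longrightarrow> beta enc dec ch (App M P) (App N P)"
| b_app_r: "beta enc dec ch M N \<Longrightarrow> beta enc dec ch (App P M) (App P N)"

definition bconv :: "('v \<Rightarrow> nat) \<Rightarrow> (nat \<Rightarrow> 'v) \<Rightarrow> (nat list \<Rightarrow> nat) \<Rightarrow> ('v, 'c) trm \<Rightarrow> ('v, 'c) trm \<Rightarrow> bool" where
  "bconv enc dec ch = equivclp (\<lambda>M N. alpha enc dec ch M N \<or> beta enc dec ch M N)"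

type_synonym ('v, 'c) ctx = "('v \<times> ('v, 'c) trm) list"

inductive ctx_ok :: "('v \<Rightarrow> nat) \<Rightarrow> (nat \<Rightarrow> 'v) \<Rightarrow> (nat list \<Rightarrow> nat) \<Rightarrow> ('c \<Rightarrow> 'c \<Rightarrow> bool) \<Rightarrow> ('c \<Rightarrow> 'c \<Rightarrow> 'c \<Rightarrow> bool)
    \<Rightarrow> ('v, 'c) ctx \<Rightarrow> bool"
  and has_type :: "('v \<Rightarrow> nat) \<Rightarrow> (nat \<Rightarrow> 'v) \<Rightarrow> (nat list \<Rightarrow> nat) \<Rightarrow> ('c \<Rightarrow> 'c \<Rightarrow> bool) \<Rightarrow> ('c \<Rightarrow> 'c \<Rightarrow> 'c \<Rightarrow> bool)
    \<Rightarrow> ('v, 'c) ctx \<Rightarrow> ('v, 'c) trm \<Rightarrow> ('v, 'c) trm \<Rightarrow> bool"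
  for enc dec ch Ax R where
  ok_nil: "ctx_ok enc dec ch Ax R []"
| ok_cons: "ctx_ok enc dec ch Ax R \<Gamma> \<Longrightarrow> has_type enc dec ch Ax R \<Gamma> A (Cst s) \<Longrightarrow> x \<notin> set (map fst \<Gamma>) \<Longrightarrow>
            ctx_ok enc dec ch Ax R ((x, A) # \<Gamma>)"
| t_sort: "ctx_ok enc dec ch Ax R \<Gamma> \<Longrightarrow> Ax s1 s2 \<Longrightarrow> has_type enc dec ch Ax R \<Gamma> (Cst s1) (Cst s2)"
| t_var: "ctx_ok enc dec ch Ax R \<Gamma> \<Longrightarrow> (x, A) \<in> set \<Gamma> \<Longrightarrow> has_type enc dec ch Ax R \<Gamma> (Var x) A"
| t_prod: "R s1 s2 s3 \<Longrightarrow> has_type enc dec ch Ax R \<Gamma> A (Cst s1) \<Longrightarrow>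
           (\<forall>y. y \<notin> set (map fst \<Gamma>) \<longrightarrow> has_type enc dec ch Ax R ((y, A) # \<Gamma>) (usubst enc dec ch B x (Var y)) (Cst s2)) \<Longrightarrow>
           has_type enc dec ch Ax R \<Gamma> (Pi x A B) (Cst s3)"
| t_abs: "R s1 s2 s3 \<Longrightarrow> has_type enc dec ch Ax R \<Gamma> A (Cst s1) \<Longrightarrow>
          (\<forall>z. z \<notin> set (map fst \<Gamma>) \<longrightarrow> has_type enc dec ch Ax R ((z, A) # \<Gamma>) (usubst enc dec ch B y (Var z)) (Cst s2)) \<Longrightarrow>
          (\<forall>z. z \<notin> set (map fst \<Gamma>) \<longrightarrow> has_type enc dec ch Ax R ((z, A) # \<Gamma>) (usubst enc dec ch M x (Var z)) (usubst enc dec ch B y (Var z))) \<Longrightarrow>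
          has_type enc dec ch Ax R \<Gamma> (Lam x A M) (Pi y A B)"
| t_app: "has_type enc dec ch Ax R \<Gamma> M (Pi x A B) \<Longrightarrow> has_type enc dec ch Ax R \<Gamma> N A \<Longrightarrow>
          has_type enc dec ch Ax R \<Gamma> (usubst enc dec ch B x N) (Cst s) \<Longrightarrow>
          has_type enc dec ch Ax R \<Gamma> (App M N) (usubst enc dec ch B x N)"
| t_conv: "has_type enc dec ch Ax R \<Gamma> M A \<Longrightarrow> bconv enc dec ch A B \<Longrightarrow> has_type enc dec ch Ax R \<Gamma> B (Cst s) \<Longrightarrow>
           has_type enc dec ch Ax R \<Gamma> M B"

inductive ctx_ok_s :: "('v \<Rightarrow> nat) \<Rightarrow> (nat \<Rightarrow> 'v) \<Rightarrow> (nat list \<Rightarrow> nat) \<Rightarrow> ('c \<Rightarrow> 'c \<Rightarrow> bool) \<Rightarrow> ('c \<Rightarrow> 'c \<Rightarrow> 'c \<Rightarrow> bool)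
    \<Rightarrow> ('v, 'c) ctx \<Rightarrow> bool"
  and has_type_s :: "('v \<Rightarrow> nat) \<Rightarrow> (nat \<Rightarrow> 'v) \<Rightarrow> (nat list \<Rightarrow> nat) \<Rightarrow> ('c \<Rightarrow> 'c \<Rightarrow> bool) \<Rightarrow> ('c \<Rightarrow> 'c \<Rightarrow> 'c \<Rightarrow> bool)
    \<Rightarrow> ('v, 'c) ctx \<Rightarrow> ('v, 'c) trm \<Rightarrow> ('v, 'c) trm \<Rightarrow> bool"
  for enc dec ch Ax R where
  oks_nil: "ctx_ok_s enc dec ch Ax R []"
| oks_cons: "ctx_ok_s enc dec ch Ax R \<Gamma> \<Longrightarrow> has_type_s enc dec ch Ax R \<Gamma> A (Cst s) \<Longrightarrow> x \<notin> set (map fst \<Gamma>) \<Longrightarrow>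
            ctx_ok_s enc dec ch Ax R ((x, A) # \<Gamma>)"
| ts_sort: "ctx_ok_s enc dec ch Ax R \<Gamma> \<Longrightarrow> Ax s1 s2 \<Longrightarrow> has_type_s enc dec ch Ax R \<Gamma> (Cst s1) (Cst s2)"
| ts_var: "ctx_ok_s enc dec ch Ax R \<Gamma> \<Longrightarrow> (x, A) \<in> set \<Gamma> \<Longrightarrow> has_type_s enc dec ch Ax R \<Gamma> (Var x) A"
| ts_prod: "R s1 s2 s3 \<Longrightarrow> y \<notin> set (removeAll x (fv B)) \<Longrightarrow> has_type_s enc dec ch Ax R \<Gamma> A (Cst s1) \<Longrightarrow>
           has_type_s enc dec ch Ax R ((y, A) # \<Gamma>) (usubst enc dec ch B x (Var y)) (Cst s2) \<Longrightarrow>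
           has_type_s enc dec ch Ax R \<Gamma> (Pi x A B) (Cst s3)"
| ts_abs: "R s1 s2 s3 \<Longrightarrow> z \<notin> set (removeAll x (fv M)) \<Longrightarrow> z \<notin> set (removeAll y (fv B)) \<Longrightarrow>
          has_type_s enc dec ch Ax R \<Gamma> A (Cst s1) \<Longrightarrow>
          has_type_s enc dec ch Ax R ((z, A) # \<Gamma>) (usubst enc dec ch B y (Var z)) (Cst s2) \<Longrightarrow>
          has_type_s enc dec ch Ax R ((z, A) # \<Gamma>) (usubst enc dec ch M x (Var z)) (usubst enc dec ch B y (Var z)) \<Longrightarrow>
          has_type_s enc dec ch Ax R \<Gamma> (Lam x A M) (Pi y A B)"
| ts_app: "has_type_s enc dec ch Ax R \<Gamma> M (Pi x A B) \<Longrightarrow> has_type_s enc dec ch Ax R \<Gamma> N A \<Longrightarrow>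
          has_type_s enc dec ch Ax R \<Gamma> (App M N) (usubst enc dec ch B x N)"
| ts_conv: "has_type_s enc dec ch Ax R \<Gamma> M A \<Longrightarrow> bconv enc dec ch A B \<Longrightarrow> has_type_s enc dec ch Ax R \<Gamma> B (Cst s) \<Longrightarrow>
           has_type_s enc dec ch Ax R \<Gamma> M B"

end

theory Submission
  imports Defs
begin

text \<open>The finitary rules are instances of the infinitely branching ones: where (prod) and (abs)
  demand a typing for every name outside the context, it suffices to pick one name that is
  additionally fresh for the bodies, and such a name exists as soon as there are infinitely
  many variables.\<close>

lemma infinite_UNIV_if_surj_nat:
  fixes enc :: "'v \<Rightarrow> nat"
  assumes "surj enc"
  shows "infinite (UNIV :: 'v set)"
  using assms finite_imageI infinite_UNIV_nat by metis

lemma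
  assumes "infinite (UNIV :: 'v set)"
  shows ctx_ok_imp_ctx_ok_s:
      "ctx_ok enc dec ch Ax R (\<Gamma> :: ('v, 'c) ctx) \<Longrightarrow> ctx_ok_s enc dec ch Ax R \<Gamma>"
    and has_type_imp_has_type_s:
      "has_type enc dec ch Ax R (\<Gamma>' :: ('v, 'c) ctx) M A \<Longrightarrow> has_type_s enc dec ch Ax R \<Gamma>' M A"
proof (induction rule: ctx_ok_has_type.inducts)
  case ok_nil
  then show ?case by (rule oks_nil)
next
  case (ok_cons \<Gamma> A s x)
  then show ?case by (blast intro: oks_cons)
next
  case (t_sort \<Gamma> s1 s2)
  then show ?case by (blast intro: ts_sort)
next
  case (t_var \<Gamma> x A)
  then show ?case by (blast intro: ts_var)
next
  case (t_prod s1 s2 s3 \<Gamma> A B x)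
  obtain y where "y \<notin> set (map fst \<Gamma> @ removeAll x (fv B))"
    using ex_new_if_finite[OF assms] by blast
  with t_prod show ?case by (intro ts_prod[where y = y]) auto
next
  case (t_abs s1 s2 s3 \<Gamma> A B y M x)
  obtain z where "z \<notin> set (map fst \<Gamma> @ removeAll x (fv M) @ removeAll y (fv B))"
    using ex_new_if_finite[OF assms] by blast
  with t_abs show ?case by (intro ts_abs[where z = z]) auto
next
  case (t_app \<Gamma> M x A B N s)
  then show ?case by (blast intro: ts_app)
next
  case (t_conv \<Gamma> M A B s)
  then show ?case by (blast intro: ts_conv)
qed

theorem mainTheorem19:
  fixes enc :: "'v \<Rightarrow> nat" and dec :: "nat \<Rightarrow> 'v" and ch :: "nat list \<Rightarrow> nat"
    and Ax :: "'c \<Rightarrow> 'c \<Rightarrow> bool" and R :: "'c \<Rightarrow> 'c \<Rightarrow> 'c \<Rightarrow> bool"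
  assumes enc_dec: "\<And>n. enc (dec n) = n"
    and ch_fresh: "\<And>ns. ch ns \<notin> set ns"
  shows "(\<forall>\<Gamma>. ctx_ok enc dec ch Ax R \<Gamma> \<longrightarrow> ctx_ok_s enc dec ch Ax R \<Gamma>) \<and>
         (\<forall>\<Gamma> M A. has_type enc dec ch Ax R \<Gamma> M A \<longrightarrow> has_type_s enc dec ch Ax R \<Gamma> M A)"
proof -
  have "surj enc"
    by (metis enc_dec surjI)
  then have "infinite (UNIV :: 'v set)"
    by (rule infinite_UNIV_if_surj_nat)
  then show ?thesis
    using ctx_ok_imp_ctx_ok_s has_type_imp_has_type_s by blast
qed

end
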